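(* Let $X$ be a separable $\mathbb{R}$-rigid space with $|X|\ge 2$ and $G$ an infinite Abelian group. Then every Korovin orbit $G_f$ in $X^G$ is $\mathbb{R}$-rigid.
   Context: $X^G$ carries the product topology. For $f\in X^G$ and $g\in G$ let $gf\in X^G$ be given by $(gf)(x)=f(xg)$, and let $G_f=\{gf:g\in G\}\subseteq X^G$ with the subspace topology. The map $f\colon G\to X$ is a Korovin mapping if $\pi_M(G_f)=X^M$ for every countable $M\subseteq G$, where $\pi_M\colon X^G\to X^M$ is the projection; in that case $G_f$ is called a Korovin orbit. A space is $\mathbb{R}$-rigid if every continuous real-valued function on it is constant. *)

theory Defs
  imports "HOL-Analysis.Analysis"
begin

text \<open>The group G is modelled as a type of class ab_group_add (written additively),
  so (g f)(x) = f (x g) becomes (g f) x = f (x + g).\<close>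

definition shift :: "'g::ab_group_add \<Rightarrow> ('g \<Rightarrow> 'a) \<Rightarrow> ('g \<Rightarrow> 'a)" where
  "shift g f = (\<lambda>x. f (x + g))"

definition orbit :: "('g::ab_group_add \<Rightarrow> 'a) \<Rightarrow> ('g \<Rightarrow> 'a) set" where
  "orbit f = {shift g f | g. True}"

definition power_top :: "'a topology \<Rightarrow> ('g \<Rightarrow> 'a) topology" where
  "power_top X = product_topology (\<lambda>_. X) UNIV"

definition korovin_mapping :: "'a topology \<Rightarrow> ('g::ab_group_add \<Rightarrow> 'a) \<Rightarrow> bool" where
  "korovin_mapping X f \<longleftrightarrow>
     (\<forall>x. f x \<in> topspace X) \<and>
     (\<forall>M. countable M \<longrightarrow>
        (\<lambda>h. restrict h M) ` orbit f = PiE M (\<lambda>_. topspace X))"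

definition R_rigid :: "'a topology \<Rightarrow> bool" where
  "R_rigid X \<longleftrightarrow> (\<forall>h. continuous_map X euclideanreal h \<longrightarrow>
      (\<forall>x\<in>topspace X. \<forall>y\<in>topspace X. h x = h y))"

end

theory Submission
  imports Defs
begin

text \<open>
  A continuous real function h on a Korovin orbit Y \<subseteq> X^G depends only on countably many
  coordinates M. This is a closing-off argument: M is closed under choosing, for every finite
  E \<subseteq> M, every tuple of values on E from a countable dense subset of X and every rational c,
  a finitely supported open box on which h < c, whenever such a box exists. Because Y projects
  onto every countable face, two points of Y that agree on M can then not be separated by a
  rational value of h.
  The projection of Y onto X^M is continuous, open and onto, hence a quotient map, so h factors
  through a continuous function on X^M. That function is constant: on a product of R-rigid spaces
  a continuous real function is unchanged by finitely many coordinate changes, and these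
  modifications of a point are dense.
\<close>

section \<open>Products of R-rigid spaces\<close>

lemma continuous_map_fun_upd_product:
  assumes "w \<in> topspace (product_topology X I)" "i \<in> I"
  shows "continuous_map (X i) (product_topology X I) (\<lambda>x. w(i := x))"
  using assms by (auto simp: continuous_map_componentwise PiE_iff extensional_def)

lemma R_rigid_product_fun_upd:
  assumes "R_rigid (X i)" "i \<in> I"
    and "continuous_map (product_topology X I) euclideanreal g"
    and "w \<in> topspace (product_topology X I)" "x \<in> topspace (X i)"
  shows "g (w(i := x)) = g w"
proof -
  have "continuous_map (X i) euclideanreal (g \<circ> (\<lambda>x. w(i := x)))"
    using continuous_map_fun_upd_product[OF assms(4,2)] assms(3)
    by (rule continuous_map_compose)
  moreover have "w i \<in> topspace (X i)"
    using assms(2,4) by auto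
  ultimately show ?thesis
    using assms(1,5) unfolding R_rigid_def by fastforce
qed

lemma R_rigid_product_finite_update:
  assumes "\<And>i. i \<in> I \<Longrightarrow> R_rigid (X i)" "finite F"
    and g: "continuous_map (product_topology X I) euclideanreal g"
    and u: "u \<in> topspace (product_topology X I)" and v: "v \<in> topspace (product_topology X I)"
  shows "g (\<lambda>i. if i \<in> F then v i else u i) = g u"
  using assms(2)
proof (induction F rule: finite_induct)
  case empty
  then show ?case by simp
next
  case (insert a F)
  define w where "w = (\<lambda>i. if i \<in> F then v i else u i)"
  have w: "w \<in> topspace (product_topology X I)"
    using u v by (auto simp: w_def PiE_iff extensional_def)
  show ?case
  proof (cases "a \<in> I")
    case True
    then have "v a \<in> topspace (X a)"
      using v by auto
    moreover have "(\<lambda>i. if i \<in> insert a F then v i else u i) = w(a := v a)"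
      by (auto simp: w_def)
    ultimately show ?thesis
      using R_rigid_product_fun_upd[OF assms(1)[OF True] True g w] insert.IH by (simp add: w_def)
  next
    case False
    then have "(\<lambda>i. if i \<in> insert a F then v i else u i) = w"
      using u v by (auto simp: w_def PiE_iff extensional_def)
    then show ?thesis
      using insert.IH by (simp add: w_def)
  qed
qed

lemma R_rigid_product_topology:
  assumes "\<And>i. i \<in> I \<Longrightarrow> R_rigid (X i)"
  shows "R_rigid (product_topology X I)"
  unfolding R_rigid_def
proof (intro allI impI ballI)
  fix g u v
  assume g: "continuous_map (product_topology X I) euclideanreal g"
    and u: "u \<in> topspace (product_topology X I)" and v: "v \<in> topspace (product_topology X I)"
  show "g u = g v"
  proof (rule ccontr)
    assume "g u \<noteq> g v"
    have "openin (product_topology X I) {w \<in> topspace (product_topology X I). g w \<in> - {g u}}"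
      using g by (rule openin_continuous_map_preimage) auto
    then obtain U where U: "finite {i \<in> I. U i \<noteq> topspace (X i)}"
      "v \<in> PiE I U" "PiE I U \<subseteq> {w \<in> topspace (product_topology X I). g w \<noteq> g u}"
      using v \<open>g u \<noteq> g v\<close> unfolding openin_product_topology_alt by force
    define F where "F = {i \<in> I. U i \<noteq> topspace (X i)}"
    have "(\<lambda>i. if i \<in> F then v i else u i) \<in> PiE I U"
      using u v U(2) by (auto simp: F_def PiE_iff extensional_def)
    then have "g (\<lambda>i. if i \<in> F then v i else u i) \<noteq> g u"
      using U(3) by blast
    then show False
      using R_rigid_product_finite_update[where X = X and I = I, OF assms _ g u v] U(1)
      unfolding F_def by blast
  qed
qed

section \<open>Subspaces of X^I with full countable projections\<close>

text \<open>This is all the argument uses of a Korovin orbit.\<close>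

definition countably_full :: "'a topology \<Rightarrow> ('i \<Rightarrow> 'a) set \<Rightarrow> bool" where
  "countably_full X Y \<longleftrightarrow>
     (\<forall>M. countable M \<longrightarrow> (\<lambda>y. restrict y M) ` Y = PiE M (\<lambda>_. topspace X))"

lemma korovin_mapping_imp_countably_full:
  "korovin_mapping X f \<Longrightarrow> countably_full X (orbit f)"
  by (simp add: korovin_mapping_def countably_full_def)

lemma countably_full_in_topspace:
  assumes "countably_full X Y" "y \<in> Y"
  shows "y i \<in> topspace X"
proof -
  have "restrict y {i} \<in> (\<lambda>y. restrict y {i}) ` Y"
    using assms(2) by (rule imageI)
  also have "\<dots> = PiE {i} (\<lambda>_. topspace X)"
    using assms(1) by (simp add: countably_full_def)
  finally show ?thesis
    by auto
qed

lemma countably_full_subset_topspace: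
  "countably_full X Y \<Longrightarrow> Y \<subseteq> topspace (product_topology (\<lambda>_. X) UNIV)"
  by (auto simp: countably_full_in_topspace)

lemma countably_full_meets_box:
  assumes "countably_full X Y" "countable {i. U i \<noteq> topspace X}"
    and "\<And>i. U i \<inter> topspace X \<noteq> {}"
  obtains y where "y \<in> Y" "\<And>i. y i \<in> U i"
proof -
  define M where "M = {i. U i \<noteq> topspace X}"
  define u where "u i = (SOME x. x \<in> U i \<inter> topspace X)" for i
  have u: "u i \<in> U i \<inter> topspace X" for i
    unfolding u_def using assms(3)[of i] by (rule some_in_eq[THEN iffD2])
  then have "restrict u M \<in> PiE M (\<lambda>_. topspace X)"
    by simp
  also have "\<dots> = (\<lambda>y. restrict y M) ` Y"
    using assms(1,2) by (simp add: countably_full_def M_def)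
  finally obtain y where y: "y \<in> Y" "restrict u M = restrict y M"
    by (rule imageE)
  have "y i \<in> U i" for i
  proof (cases "i \<in> M")
    case True
    then have "u i = y i"
      using fun_cong[OF y(2), of i] by simp
    then show ?thesis
      using u by (metis IntD1)
  next
    case False
    then show ?thesis
      using countably_full_in_topspace[OF assms(1) y(1)] by (simp add: M_def)
  qed
  with y(1) show thesis
    by (rule that)
qed

lemma countably_full_restrict_box:
  assumes "countably_full X Y" "countable M" "countable {i. B i \<noteq> topspace X}"
    and "\<And>i. B i \<subseteq> topspace X" "\<And>i. B i \<noteq> {}"
  shows "(\<lambda>y. restrict y M) ` {y \<in> Y. \<forall>i. y i \<in> B i} = PiE M B"
proof
  show "(\<lambda>y. restrict y M) ` {y \<in> Y. \<forall>i. y i \<in> B i} \<subseteq> PiE M B"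
    by auto
  show "PiE M B \<subseteq> (\<lambda>y. restrict y M) ` {y \<in> Y. \<forall>i. y i \<in> B i}"
  proof
    fix u assume u: "u \<in> PiE M B"
    define C where "C i = (if i \<in> M then {u i} else B i)" for i
    have "{i. C i \<noteq> topspace X} \<subseteq> M \<union> {i. B i \<noteq> topspace X}"
      by (auto simp: C_def)
    then have "countable {i. C i \<noteq> topspace X}"
      by (rule countable_subset) (use assms(2,3) in simp)
    moreover have "C i \<inter> topspace X \<noteq> {}" for i
      using u assms(4,5)[of i] by (auto simp: C_def Int_absorb1)
    ultimately obtain y where y: "y \<in> Y" "\<And>i. y i \<in> C i"
      by (rule countably_full_meets_box[OF assms(1)]) blast
    have "y i \<in> B i" for i
      using y(2)[of i] u by (auto simp: C_def split: if_splits)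
    moreover have "restrict y M = u"
    proof
      show "restrict y M i = u i" for i
        using y(2)[of i] u by (auto simp: C_def PiE_iff extensional_def)
    qed
    ultimately show "u \<in> (\<lambda>y. restrict y M) ` {y \<in> Y. \<forall>i. y i \<in> B i}"
      using y(1) by blast
  qed
qed

lemma countably_full_open_map_restrict:
  assumes "countably_full X Y" "countable M"
  shows "open_map (subtopology (product_topology (\<lambda>_. X) UNIV) Y)
           (product_topology (\<lambda>_. X) M) (\<lambda>y. restrict y M)"
  unfolding open_map_def
proof (intro allI impI)
  fix U assume "openin (subtopology (product_topology (\<lambda>_. X) UNIV) Y) U"
  then obtain S where S: "openin (product_topology (\<lambda>_. X) UNIV) S" "U = S \<inter> Y"
    by (auto simp: openin_subtopology)
  show "openin (product_topology (\<lambda>_. X) M) ((\<lambda>y. restrict y M) ` U)"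
  proof (subst openin_subopen, intro ballI)
    fix u assume "u \<in> (\<lambda>y. restrict y M) ` U"
    then obtain y where y: "y \<in> S" "u = restrict y M"
      using S(2) by blast
    then obtain B where B: "finite {i. B i \<noteq> topspace X}" "\<And>i. openin X (B i)"
      "y \<in> PiE UNIV B" "PiE UNIV B \<subseteq> S"
      using S(1) unfolding openin_product_topology_alt by force
    have "PiE M B = (\<lambda>y. restrict y M) ` {y \<in> Y. \<forall>i. y i \<in> B i}"
      using B(3) openin_subset[OF B(2)]
      by (intro countably_full_restrict_box[OF assms, symmetric] countable_finite[OF B(1)]) auto
    also have "\<dots> \<subseteq> (\<lambda>y. restrict y M) ` U"
      using B(4) S(2) by (intro image_mono) (auto simp: PiE_UNIV_domain)
    finally have "PiE M B \<subseteq> (\<lambda>y. restrict y M) ` U" .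
    moreover have "openin (product_topology (\<lambda>_. X) M) (PiE M B)"
      using B(1,2) by (rule product_topology_basis[rotated])
    moreover have "u \<in> PiE M B"
      using y(2) B(3) by auto
    ultimately show "\<exists>T. openin (product_topology (\<lambda>_. X) M) T \<and> u \<in> T \<and>
        T \<subseteq> (\<lambda>y. restrict y M) ` U"
      by blast
  qed
qed

lemma countably_full_quotient_map_restrict:
  assumes "countably_full X Y" "countable M"
  shows "quotient_map (subtopology (product_topology (\<lambda>_. X) UNIV) Y)
           (product_topology (\<lambda>_. X) M) (\<lambda>y. restrict y M)"
proof (rule continuous_open_imp_quotient_map)
  have "topspace (subtopology (product_topology (\<lambda>_. X) UNIV) Y) = Y"
    using countably_full_subset_topspace[OF assms(1)] by (rule topspace_subtopology_subset)
  then show "(\<lambda>y. restrict y M) ` topspace (subtopology (product_topology (\<lambda>_. X) UNIV) Y) =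
      topspace (product_topology (\<lambda>_. X) M)"
    using assms by (simp add: countably_full_def)
  show "continuous_map (subtopology (product_topology (\<lambda>_. X) UNIV) Y)
      (product_topology (\<lambda>_. X) M) (\<lambda>y. restrict y M)"
    by (rule continuous_map_from_subtopology[OF continuous_on_restrict]) simp
qed (rule countably_full_open_map_restrict[OF assms])

section \<open>Continuous functions depend on countably many coordinates\<close>

lemma continuous_map_product_subspace_box:
  assumes "continuous_map (subtopology (product_topology T UNIV) Y) Z h"
    and "y \<in> Y" "y \<in> topspace (product_topology T UNIV)" "openin Z W" "h y \<in> W"
  obtains U where "\<And>i. openin (T i) (U i)" "finite {i. U i \<noteq> topspace (T i)}"
    "\<And>i. y i \<in> U i" "\<And>z. z \<in> Y \<Longrightarrow> (\<And>i. z i \<in> U i) \<Longrightarrow> h z \<in> W"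
proof -
  obtain S where S: "openin (product_topology T UNIV) S"
    "{x \<in> topspace (subtopology (product_topology T UNIV) Y). h x \<in> W} = S \<inter> Y"
    using openin_continuous_map_preimage[OF assms(1,4)] by (auto simp: openin_subtopology)
  have "y \<in> S"
    using S(2) assms(2,3,5) by auto
  then obtain U where U: "finite {i. U i \<noteq> topspace (T i)}" "\<And>i. openin (T i) (U i)"
    "y \<in> PiE UNIV U" "PiE UNIV U \<subseteq> S"
    using S(1) unfolding openin_product_topology_alt by force
  show thesis
  proof (rule that[OF U(2,1)])
    show "y i \<in> U i" for i
      using U(3) by auto
    fix z assume "z \<in> Y" "\<And>i. z i \<in> U i"
    then have "z \<in> S \<inter> Y"
      using U(4) by (auto simp: PiE_UNIV_domain)
    then show "h z \<in> W"
      using S(2) by blast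
  qed
qed

lemma countable_closure_finite_subsets:
  assumes "\<And>E. finite E \<Longrightarrow> countable (\<Phi> E)"
  obtains M where "countable M" "\<And>E. finite E \<Longrightarrow> E \<subseteq> M \<Longrightarrow> \<Phi> E \<subseteq> M"
proof -
  define step where "step A = A \<union> (\<Union>E\<in>{E. finite E \<and> E \<subseteq> A}. \<Phi> E)" for A
  define Ms where "Ms n = (step ^^ n) {}" for n
  have countable_step: "countable (step A)" if "countable A" for A
  proof -
    have "countable (\<Union>E\<in>{E. finite E \<and> E \<subseteq> A}. \<Phi> E)"
      by (rule countable_UN[OF countable_Collect_finite_subset[OF that]]) (simp add: assms)
    then show ?thesis
      using that by (simp add: step_def)
  qed
  have countable_Ms: "countable (Ms n)" for n
    by (induction n) (simp_all add: Ms_def countable_step)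
  have "incseq Ms"
    by (rule incseq_SucI) (simp add: Ms_def step_def)
  then have chain: "subset.chain UNIV (range Ms)"
    by (simp add: subset_chain_def) (metis incseq_def nat_le_linear)
  show thesis
  proof
    show "countable (\<Union>n. Ms n)"
      using countable_Ms by blast
    fix E assume "finite E" "E \<subseteq> (\<Union>n. Ms n)"
    then obtain B where "B \<in> range Ms" "E \<subseteq> B"
      by (rule finite_subset_Union_chain[OF _ _ _ chain]) auto
    then obtain n where "E \<subseteq> Ms n"
      by blast
    with \<open>finite E\<close> have "\<Phi> E \<subseteq> Ms (Suc n)"
      by (auto simp: Ms_def step_def)
    then show "\<Phi> E \<subseteq> (\<Union>n. Ms n)"
      by blast
  qed
qed

text \<open>
  With e valued in a countable set D and c rational, there are only countably many parameters
  (E, e, c) with E a finite subset of a countable set; this keeps the closing-off countable.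
\<close>

definition sublevel_box ::
    "'a topology \<Rightarrow> ('i \<Rightarrow> 'a) set \<Rightarrow> (('i \<Rightarrow> 'a) \<Rightarrow> real) \<Rightarrow> 'i set \<Rightarrow> ('i \<Rightarrow> 'a) \<Rightarrow> real \<Rightarrow>
      ('i \<Rightarrow> 'a set) \<Rightarrow> bool" where
  "sublevel_box X Y h E e c U \<longleftrightarrow>
     (\<forall>i. openin X (U i) \<and> U i \<noteq> {}) \<and> finite {i. U i \<noteq> topspace X} \<and>
     (\<forall>i\<in>E. e i \<in> U i) \<and> (\<forall>z\<in>Y. (\<forall>i. z i \<in> U i) \<longrightarrow> h z < c)"

definition reflects_sublevel_boxes ::
    "'a topology \<Rightarrow> ('i \<Rightarrow> 'a) set \<Rightarrow> (('i \<Rightarrow> 'a) \<Rightarrow> real) \<Rightarrow> 'a set \<Rightarrow> 'i set \<Rightarrow> bool" where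
  "reflects_sublevel_boxes X Y h D M \<longleftrightarrow>
     (\<forall>E e c U. finite E \<longrightarrow> E \<subseteq> M \<longrightarrow> e \<in> PiE E (\<lambda>_. D) \<longrightarrow> c \<in> \<rat> \<longrightarrow>
        sublevel_box X Y h E e c U \<longrightarrow>
        (\<exists>W. sublevel_box X Y h E e c W \<and> {i. W i \<noteq> topspace X} \<subseteq> M))"

lemma countable_reflects_sublevel_boxes:
  assumes "countable D"
  obtains M where "countable M" "reflects_sublevel_boxes X Y h D M"
proof -
  define W where "W E e c = (SOME U. sublevel_box X Y h E e c U)" for E e c
  have W: "sublevel_box X Y h E e c (W E e c)" if "\<exists>U. sublevel_box X Y h E e c U" for E e c
    unfolding W_def using that by (rule someI_ex)
  define C where "C E e = {c \<in> \<rat>. \<exists>U. sublevel_box X Y h E e c U}" for E e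
  define \<Phi> where "\<Phi> E = (\<Union>e\<in>PiE E (\<lambda>_. D). \<Union>c\<in>C E e. {i. W E e c i \<noteq> topspace X})" for E
  have countable_\<Phi>: "countable (\<Phi> E)" if "finite E" for E
    unfolding \<Phi>_def
  proof (intro countable_UN[OF countable_PiE[OF that assms]] countable_UN)
    show "countable (C E e)" for e
      unfolding C_def using countable_rat by (rule countable_subset[rotated]) blast
    show "countable {i. W E e c i \<noteq> topspace X}" if "c \<in> C E e" for e c
      using W[of E e c] that by (auto simp: C_def sublevel_box_def intro: countable_finite)
  qed
  obtain M where "countable M" and M: "\<And>E. finite E \<Longrightarrow> E \<subseteq> M \<Longrightarrow> \<Phi> E \<subseteq> M"
    by (rule countable_closure_finite_subsets[of \<Phi>]) (use countable_\<Phi> in auto)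
  have "reflects_sublevel_boxes X Y h D M"
    unfolding reflects_sublevel_boxes_def
  proof (intro allI impI)
    fix E e c U
    assume E: "finite E" "E \<subseteq> M" and e: "e \<in> PiE E (\<lambda>_. D)"
      and c: "c \<in> \<rat>" and U: "sublevel_box X Y h E e c U"
    then have "c \<in> C E e"
      unfolding C_def by blast
    then have "{i. W E e c i \<noteq> topspace X} \<subseteq> (\<Union>c\<in>C E e. {i. W E e c i \<noteq> topspace X})"
      by (rule UN_upper)
    also have "\<dots> \<subseteq> \<Phi> E"
      unfolding \<Phi>_def using e by (rule UN_upper)
    also have "\<Phi> E \<subseteq> M"
      using E by (rule M)
    finally show "\<exists>W. sublevel_box X Y h E e c W \<and> {i. W i \<noteq> topspace X} \<subseteq> M"
      using W U by blast
  qed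
  with \<open>countable M\<close> show thesis
    by (rule that)
qed

lemma dense_PiE_exists:
  assumes "X closure_of D = topspace X" "\<And>i. i \<in> E \<Longrightarrow> openin X (V i)" "\<And>i. i \<in> E \<Longrightarrow> V i \<noteq> {}"
  shows "\<exists>e\<in>PiE E (\<lambda>_. D). \<forall>i\<in>E. e i \<in> V i"
proof -
  define e where "e = (\<lambda>i\<in>E. SOME d. d \<in> D \<inter> V i)"
  have e: "e i \<in> D \<inter> V i" if "i \<in> E" for i
  proof -
    have "D \<inter> V i \<noteq> {}"
      using assms(1) assms(2,3)[OF that] by (simp add: dense_intersects_open)
    then show ?thesis
      unfolding e_def restrict_apply'[OF that] by (rule some_in_eq[THEN iffD2])
  qed
  moreover have "e \<in> extensional E"
    unfolding e_def by simp
  ultimately have "e \<in> PiE E (\<lambda>_. D)"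
    by (simp add: PiE_iff)
  with e show ?thesis
    by blast
qed

lemma sublevel_box_meets_box:
  assumes "countably_full X Y" "sublevel_box X Y h E e c W" "{i. W i \<noteq> topspace X} \<subseteq> M"
    and V: "\<And>i. openin X (V i)" "finite {i. V i \<noteq> topspace X}" "\<And>i. V i \<noteq> {}"
    and "M \<inter> {i. V i \<noteq> topspace X} \<subseteq> E" "\<And>i. i \<in> E \<Longrightarrow> e i \<in> V i"
  shows "\<exists>z\<in>Y. h z < c \<and> (\<forall>i. z i \<in> V i)"
proof -
  have W_open: "openin X (W i)" and W_ne: "W i \<noteq> {}" for i
    using assms(2) unfolding sublevel_box_def by auto
  have W_fin: "finite {i. W i \<noteq> topspace X}" and W_e: "\<And>i. i \<in> E \<Longrightarrow> e i \<in> W i"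
    and W_h: "\<forall>z\<in>Y. (\<forall>i. z i \<in> W i) \<longrightarrow> h z < c"
    using assms(2) unfolding sublevel_box_def by auto
  have "countable {i. W i \<inter> V i \<noteq> topspace X}"
  proof (rule countable_finite[OF finite_subset])
    show "{i. W i \<inter> V i \<noteq> topspace X} \<subseteq> {i. W i \<noteq> topspace X} \<union> {i. V i \<noteq> topspace X}"
      by auto
  qed (use W_fin V(2) in simp)
  moreover have "W i \<inter> V i \<inter> topspace X \<noteq> {}" for i
  proof -
    consider "i \<in> E" | "i \<in> M" "V i = topspace X" | "W i = topspace X"
      using assms(3,7) by blast
    then show ?thesis
    proof cases
      case 1
      then show ?thesis
        using W_e assms(8) openin_subset[OF W_open] by blast
    next
      case 2
      then show ?thesis
        using W_ne openin_subset[OF W_open] by blast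
    next
      case 3
      then show ?thesis
        using V(3) openin_subset[OF V(1)] by blast
    qed
  qed
  ultimately obtain z where "z \<in> Y" "\<And>i. z i \<in> W i \<inter> V i"
    by (rule countably_full_meets_box[OF assms(1)]) blast
  with W_h show ?thesis
    by blast
qed

lemma reflects_sublevel_boxes_not_less:
  assumes "countably_full X Y" "X closure_of D = topspace X" "reflects_sublevel_boxes X Y h D M"
    and h: "continuous_map (subtopology (product_topology (\<lambda>_. X) UNIV) Y) euclideanreal h"
    and y: "y \<in> Y" "y' \<in> Y" "\<And>i. i \<in> M \<Longrightarrow> y i = y' i"
  shows "\<not> h y < h y'"
proof
  assume "h y < h y'"
  then obtain c where c: "c \<in> \<rat>" "h y < c" "c < h y'"
    using Rats_dense_in_real by blast
  have Y: "Y \<subseteq> topspace (product_topology (\<lambda>_. X) UNIV)"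
    using assms(1) by (rule countably_full_subset_topspace)
  have "openin euclideanreal {..<c}" "h y \<in> {..<c}"
    using c(2) by auto
  then obtain B where B: "\<And>i. openin X (B i)" "finite {i. B i \<noteq> topspace X}" "\<And>i. y i \<in> B i"
    "\<And>z. z \<in> Y \<Longrightarrow> (\<And>i. z i \<in> B i) \<Longrightarrow> h z \<in> {..<c}"
    by (rule continuous_map_product_subspace_box[OF h y(1) subsetD[OF Y y(1)]]) blast
  have "openin euclideanreal {c<..}" "h y' \<in> {c<..}"
    using c(3) by auto
  then obtain B' where B': "\<And>i. openin X (B' i)" "finite {i. B' i \<noteq> topspace X}" "\<And>i. y' i \<in> B' i"
    "\<And>z. z \<in> Y \<Longrightarrow> (\<And>i. z i \<in> B' i) \<Longrightarrow> h z \<in> {c<..}"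
    by (rule continuous_map_product_subspace_box[OF h y(2) subsetD[OF Y y(2)]]) blast
  define E where "E = M \<inter> {i. B' i \<noteq> topspace X}"
  have BB': "openin X (B i \<inter> B' i)" "B i \<inter> B' i \<noteq> {}" if "i \<in> E" for i
  proof -
    show "openin X (B i \<inter> B' i)"
      using B(1)[of i] B'(1)[of i] by (rule openin_Int)
    have "y i = y' i"
      using y(3) that by (simp add: E_def)
    then show "B i \<inter> B' i \<noteq> {}"
      using B(3)[of i] B'(3)[of i] by auto
  qed
  obtain e where e: "e \<in> PiE E (\<lambda>_. D)" "\<forall>i\<in>E. e i \<in> B i \<inter> B' i"
    using dense_PiE_exists[where V = "\<lambda>i. B i \<inter> B' i", OF assms(2) BB'] by blast
  have "sublevel_box X Y h E e c B"
    unfolding sublevel_box_def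
  proof (intro conjI allI ballI impI)
    show "openin X (B i)" "B i \<noteq> {}" for i
      using B(1,3) by auto
    show "e i \<in> B i" if "i \<in> E" for i
      using e(2) that by blast
    show "h z < c" if "z \<in> Y" "\<forall>i. z i \<in> B i" for z
      using B(4) that by simp
  qed (rule B(2))
  moreover have "finite E" "E \<subseteq> M"
    using B'(2) by (auto simp: E_def)
  ultimately obtain W where W: "sublevel_box X Y h E e c W" "{i. W i \<noteq> topspace X} \<subseteq> M"
    using assms(3)[unfolded reflects_sublevel_boxes_def, rule_format, OF _ _ e(1) c(1)] by blast
  \<comment> \<open>W lives on M, and B' meets M only in E, where both boxes contain e.\<close>
  have "\<exists>z\<in>Y. h z < c \<and> (\<forall>i. z i \<in> B' i)"
  proof (rule sublevel_box_meets_box[where V = B', OF assms(1) W B'(1,2)])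
    show "B' i \<noteq> {}" for i
      using B'(3) by blast
    show "e i \<in> B' i" if "i \<in> E" for i
      using e(2) that by blast
  qed (simp add: E_def)
  then obtain z where z: "z \<in> Y" "h z < c" "\<And>i. z i \<in> B' i"
    by blast
  have "h z > c"
    using B'(4)[OF z(1,3)] by simp
  with z(2) show False
    by simp
qed

lemma countably_full_continuous_depends_countable:
  assumes "separable_space X" "countably_full X Y"
    and h: "continuous_map (subtopology (product_topology (\<lambda>_. X) UNIV) Y) euclideanreal h"
  obtains M where "countable M"
    "\<And>y y'. y \<in> Y \<Longrightarrow> y' \<in> Y \<Longrightarrow> (\<And>i. i \<in> M \<Longrightarrow> y i = y' i) \<Longrightarrow> h y = h y'"
proof -
  obtain D where D: "countable D" "X closure_of D = topspace X"
    using assms(1) unfolding separable_space_def by blast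
  obtain M where M: "countable M" "reflects_sublevel_boxes X Y h D M"
    using countable_reflects_sublevel_boxes[OF D(1)] by blast
  note not_less = reflects_sublevel_boxes_not_less[OF assms(2) D(2) M(2) h]
  show thesis
  proof (rule that[OF M(1)])
    fix y y' assume yY: "y \<in> Y" "y' \<in> Y" and agree: "\<And>i. i \<in> M \<Longrightarrow> y i = y' i"
    then have "\<not> h y < h y'" "\<not> h y' < h y"
      using not_less[OF yY agree] not_less[OF yY(2,1) agree[symmetric]] by auto
    then show "h y = h y'"
      by simp
  qed
qed

section \<open>R-rigidity of the orbit\<close>

theorem R_rigid_countably_full:
  assumes "separable_space X" "R_rigid X" "countably_full X Y"
  shows "R_rigid (subtopology (product_topology (\<lambda>_. X) UNIV) Y)"
  unfolding R_rigid_def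
proof (intro allI impI ballI)
  fix h p q
  assume h: "continuous_map (subtopology (product_topology (\<lambda>_. X) UNIV) Y) euclideanreal h"
    and p: "p \<in> topspace (subtopology (product_topology (\<lambda>_. X) UNIV) Y)"
    and q: "q \<in> topspace (subtopology (product_topology (\<lambda>_. X) UNIV) Y)"
  obtain M where "countable M" and depends:
    "\<And>y y'. y \<in> Y \<Longrightarrow> y' \<in> Y \<Longrightarrow> (\<And>i. i \<in> M \<Longrightarrow> y i = y' i) \<Longrightarrow> h y = h y'"
    using countably_full_continuous_depends_countable[OF assms(1,3) h] by blast
  obtain g where g: "continuous_map (product_topology (\<lambda>_. X) M) euclideanreal g"
    and hg: "\<And>y. y \<in> topspace (subtopology (product_topology (\<lambda>_. X) UNIV) Y) \<Longrightarrow>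
      g (restrict y M) = h y"
  proof (rule quotient_map_lift_exists[OF countably_full_quotient_map_restrict[OF assms(3) \<open>countable M\<close>] h])
    show "h y = h y'" if "y \<in> topspace (subtopology (product_topology (\<lambda>_. X) UNIV) Y)"
      "y' \<in> topspace (subtopology (product_topology (\<lambda>_. X) UNIV) Y)"
      "restrict y M = restrict y' M" for y y'
      using that depends[of y y'] by (metis IntE restrict_apply' topspace_subtopology)
  qed blast
  have "restrict p M \<in> topspace (product_topology (\<lambda>_. X) M)"
    "restrict q M \<in> topspace (product_topology (\<lambda>_. X) M)"
    using p q by auto
  then have "g (restrict p M) = g (restrict q M)"
    using R_rigid_product_topology[of M "\<lambda>_. X"] assms(2) g unfolding R_rigid_def by blast
  then show "h p = h q"
    using hg p q by simp
qed

theorem corollary4p8: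
  fixes X :: "'a topology" and f :: "'g::ab_group_add \<Rightarrow> 'a"
  assumes "separable_space X" and "R_rigid X"
    and "\<exists>a\<in>topspace X. \<exists>b\<in>topspace X. a \<noteq> b"
    and "infinite (UNIV :: 'g set)"
    and "korovin_mapping X f"
  shows "R_rigid (subtopology (power_top X) (orbit f))"
  unfolding power_top_def
  \<comment> \<open>The hypotheses on X and G only make Korovin mappings possible; the proof does not need them.\<close>
  using assms(1,2) korovin_mapping_imp_countably_full[OF assms(5)]
  by (rule R_rigid_countably_full)

end
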